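(* Let $M$, $P_0,P_1,N$ be as in the context and let $V\subset M$ be an open set on which $N$ has $n$ pairwise distinct eigenvalues, each of multiplicity $2$, given by smooth functions $\lambda_1,\dots,\lambda_n$. Write the minimal polynomial of $N$ as $\Delta_N(\lambda)=\prod_{i=1}^n(\lambda-\lambda_i)=\lambda^n-c_1\lambda^{n-1}-c_2\lambda^{n-2}-\cdots-c_n$. Then for all $\lambda$, $$N^*d\Delta_N(\lambda)=\lambda\,d\Delta_N(\lambda)+\Delta_N(\lambda)\,dc_1,$$ equivalently $N^*dc_i=dc_{i+1}+c_i\,dc_1$ for $i=1,\dots,n$, with $c_{n+1}\equiv0$.
   Context: $M$ is a $2n$-dimensional manifold with compatible Poisson tensors $P_0$ (invertible) and $P_1$ (i.e. $P_0+tP_1$ is Poisson for all $t$), and $N$ is the $(1,1)$-tensor with $P_1=NP_0$; $N^*=P_0^{-1}P_1$ is its adjoint acting on $1$-forms; $d$ denotes the differential on $M$ with $\lambda$ held fixed. *)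

theory Defs
  imports "HOL-Analysis.Analysis" "HOL-Computational_Algebra.Polynomial"
begin

text \<open>Local coordinate model: a chart domain U of the 2n-manifold is an open subset of
  real^'m with CARD('m) = 2n. Tensors are given by their component matrices.\<close>

definition partial :: "(real^'m \<Rightarrow> real) \<Rightarrow> real^'m \<Rightarrow> 'm \<Rightarrow> real" where
  "partial f x l = frechet_derivative f (at x) (axis l 1)"

definition dfun :: "(real^'m \<Rightarrow> real) \<Rightarrow> real^'m \<Rightarrow> real^'m" where
  "dfun f x = (\<chi> l. partial f x l)"

coinductive smooth_on :: "(real^'m) set \<Rightarrow> (real^'m \<Rightarrow> real) \<Rightarrow> bool" where
  "\<lbrakk>\<forall>x\<in>S. f differentiable (at x); \<forall>l. smooth_on S (\<lambda>x. partial f x l)\<rbrakk>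
     \<Longrightarrow> smooth_on S f"

definition is_poisson :: "(real^'m) set \<Rightarrow> (real^'m \<Rightarrow> real^'m^'m) \<Rightarrow> bool" where
  "is_poisson U P \<longleftrightarrow>
     (\<forall>i j. smooth_on U (\<lambda>x. P x $ i $ j)) \<and>
     (\<forall>x\<in>U. transpose (P x) = - P x) \<and>
     (\<forall>x\<in>U. \<forall>i j k. (\<Sum>l\<in>UNIV.
          P x $ i $ l * partial (\<lambda>y. P y $ j $ k) x l
        + P x $ j $ l * partial (\<lambda>y. P y $ k $ i) x l
        + P x $ k $ l * partial (\<lambda>y. P y $ i $ j) x l) = 0)"

definition compatible_poisson :: "(real^'m) set \<Rightarrow> (real^'m \<Rightarrow> real^'m^'m) \<Rightarrow> (real^'m \<Rightarrow> real^'m^'m) \<Rightarrow> bool" where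
  "compatible_poisson U P0 P1 \<longleftrightarrow> (\<forall>t::real. is_poisson U (\<lambda>x. P0 x + t *\<^sub>R P1 x))"

text \<open>N with P1 = N P0, and its adjoint N* = P0^{-1} P1 acting on covectors.\<close>
definition recursion_op :: "(real^'m \<Rightarrow> real^'m^'m) \<Rightarrow> (real^'m \<Rightarrow> real^'m^'m) \<Rightarrow> real^'m \<Rightarrow> real^'m^'m" where
  "recursion_op P0 P1 x = P1 x ** matrix_inv (P0 x)"

definition recursion_adj :: "(real^'m \<Rightarrow> real^'m^'m) \<Rightarrow> (real^'m \<Rightarrow> real^'m^'m) \<Rightarrow> real^'m \<Rightarrow> real^'m^'m" where
  "recursion_adj P0 P1 x = matrix_inv (P0 x) ** P1 x"

text \<open>Minimal polynomial Delta_N = prod (t - lambda_i) and its coefficients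
  Delta_N(t) = t^n - c_1 t^(n-1) - ... - c_n; c_k = 0 outside 1..n (so c_(n+1) = 0).\<close>
definition min_poly :: "nat \<Rightarrow> (nat \<Rightarrow> real^'m \<Rightarrow> real) \<Rightarrow> real^'m \<Rightarrow> real poly" where
  "min_poly n lam x = (\<Prod>i<n. [:- lam i x, 1:])"

definition cf :: "nat \<Rightarrow> (nat \<Rightarrow> real^'m \<Rightarrow> real) \<Rightarrow> nat \<Rightarrow> real^'m \<Rightarrow> real" where
  "cf n lam k x = (if 1 \<le> k \<and> k \<le> n then - coeff (min_poly n lam x) (n - k) else 0)"

end

theory Submission
  imports Defs
begin

text \<open>
  Compatibility of P0 and P1, with P0 invertible, makes the Nijenhuis torsion of N vanish. Contracting
  the vanishing torsion against a matrix K that commutes with N gives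
  \<open>\<Sum>l. N\<^sub>l\<^sub>j tr(K \<partial>\<^sub>lN) = tr(K N \<partial>\<^sub>jN)\<close>. By Jacobi's formula
  \<open>d det(t - N) = - det(t - N) tr((t - N)\<^sup>-\<^sup>1 dN)\<close>, so taking \<open>K = (t - N)\<^sup>-\<^sup>1\<close> yields
  \<open>N\<^sup>* d det(t - N) = t d det(t - N) + det(t - N) d tr N\<close>. As \<open>det(t - N) = \<Delta>\<^sub>N(t)\<^sup>2\<close>, this becomes
  \<open>N\<^sup>* d\<Delta>\<^sub>N(t) = t d\<Delta>\<^sub>N(t) + \<Delta>\<^sub>N(t) s\<close> with \<open>s = d tr N / 2\<close>, first for the t with \<open>\<Delta>\<^sub>N(t) \<noteq> 0\<close> and
  then, comparing coefficients of these polynomial identities in t, for all t. The leading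
  coefficient identifies s with \<open>dc\<^sub>1\<close>, the others give the recursion for the \<open>dc\<^sub>i\<close>.
\<close>

lemma sum_rotate3:
  "(\<Sum>a\<in>A. \<Sum>b\<in>B. \<Sum>c\<in>C. f a b c) = (\<Sum>c\<in>C. \<Sum>a\<in>A. \<Sum>b\<in>B. f a b c)"
  by (subst sum.swap) (rule sum.cong[OF refl], rule sum.swap)

lemma sum_rotate4:
  "(\<Sum>a\<in>A. \<Sum>b\<in>B. \<Sum>c\<in>C. \<Sum>d\<in>D. f a b c d) = (\<Sum>d\<in>D. \<Sum>a\<in>A. \<Sum>b\<in>B. \<Sum>c\<in>C. f a b c d)"
  by (subst sum.swap) (rule sum.cong[OF refl], rule sum_rotate3)

lemma sum_mat1_mult: "(\<Sum>l\<in>UNIV. (mat 1 :: real^'m^'m)$a$l * f l) = f a"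
  by (simp add: mat_def if_distrib if_distribR cong: if_cong)

lemma skew_matrix_entry:
  assumes "transpose X = - (X::real^'m^'m)"
  shows "X$a$b = - X$b$a"
proof -
  have "(transpose X)$b$a = (- X)$b$a" using assms by simp
  thus ?thesis by (simp add: transpose_def)
qed

lemma transpose_add: "transpose (X + Y) = transpose X + transpose (Y::real^'n^'m)"
  by (simp add: transpose_def vec_eq_iff)

lemma transpose_diff: "transpose (X - Y) = transpose X - transpose (Y::real^'n^'m)"
  by (simp add: transpose_def vec_eq_iff)

lemma transpose_uminus: "transpose (- X) = - transpose (X::real^'n^'m)"
  by (simp add: transpose_def vec_eq_iff)

lemma matrix_diff_ldistrib: "(Z::real^'n^'m) ** (X - Y) = Z ** X - Z ** Y"
  by (simp add: matrix_matrix_mult_def vec_eq_iff sum_subtractf right_diff_distrib)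

lemma matrix_diff_rdistrib: "((X::real^'n^'m) - Y) ** Z = X ** Z - Y ** Z"
  by (simp add: matrix_matrix_mult_def vec_eq_iff sum_subtractf left_diff_distrib)

lemma matrix_uminus_left: "(- X::real^'n^'m) ** Y = - (X ** Y)"
  by (simp add: matrix_matrix_mult_def vec_eq_iff sum_negf)

lemma matrix_uminus_right: "(X::real^'n^'m) ** (- Y) = - (X ** Y)"
  by (simp add: matrix_matrix_mult_def vec_eq_iff sum_negf)

lemma trace_scaleR: "trace (c *\<^sub>R (X::real^'n^'n)) = c * trace X"
  by (simp add: trace_def sum_distrib_left)

lemma invertible_matrix_inv:
  assumes "invertible (M::real^'m^'m)"
  shows "M ** matrix_inv M = mat 1" and "matrix_inv M ** M = mat 1"
proof -
  have "\<exists>M'. M ** M' = mat 1 \<and> M' ** M = mat 1" using assms unfolding invertible_def .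
  hence "M ** matrix_inv M = mat 1 \<and> matrix_inv M ** M = mat 1"
    unfolding matrix_inv_def by (rule someI_ex)
  thus "M ** matrix_inv M = mat 1" "matrix_inv M ** M = mat 1" by auto
qed

definition lower3 :: "real^'m^'m \<Rightarrow> ('m \<Rightarrow> 'm \<Rightarrow> 'm \<Rightarrow> real) \<Rightarrow> 'm \<Rightarrow> 'm \<Rightarrow> 'm \<Rightarrow> real" where
  "lower3 W S a b c = (\<Sum>i\<in>UNIV. \<Sum>j\<in>UNIV. \<Sum>k\<in>UNIV. W$a$i * W$b$j * W$c$k * S i j k)"

lemma lower3_add: "lower3 W (\<lambda>i j k. S i j k + R i j k) a b c = lower3 W S a b c + lower3 W R a b c"
  by (simp add: lower3_def distrib_left sum.distrib)

lemma lower3_rotate: "lower3 W (\<lambda>i j k. S j k i) a b c = lower3 W S b c a"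
proof -
  have "lower3 W (\<lambda>i j k. S j k i) a b c
      = (\<Sum>i\<in>UNIV. \<Sum>j\<in>UNIV. \<Sum>k\<in>UNIV. W$b$j * W$c$k * W$a$i * S j k i)"
    unfolding lower3_def by (simp add: mult_ac)
  also have "\<dots> = (\<Sum>j\<in>UNIV. \<Sum>k\<in>UNIV. \<Sum>i\<in>UNIV. W$b$j * W$c$k * W$a$i * S j k i)"
    by (rule sum_rotate3[symmetric])
  finally show ?thesis unfolding lower3_def .
qed

lemma lower3_cyclic_sum:
  assumes "\<And>i j k. S i j k + S j k i + S k i j = 0"
  shows "lower3 W S a b c + lower3 W S b c a + lower3 W S c a b = 0"
proof -
  have "lower3 W (\<lambda>i j k. S i j k + S j k i + S k i j) a b c = 0"
    using assms by (simp add: lower3_def)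
  moreover have "lower3 W (\<lambda>i j k. S i j k + S j k i + S k i j) a b c
      = lower3 W S a b c + lower3 W S b c a + lower3 W S c a b"
    using lower3_add[of W "\<lambda>i j k. S i j k + S j k i" "\<lambda>i j k. S k i j"]
      lower3_add[of W S "\<lambda>i j k. S j k i"] lower3_rotate[of W S]
      lower3_rotate[of W "\<lambda>i j k. S j k i"]
    by simp
  ultimately show ?thesis by simp
qed

lemma lower3_contract:
  "lower3 W (\<lambda>i j k. \<Sum>l\<in>UNIV. P$i$l * Q l $j$k) a b c
   = (\<Sum>l\<in>UNIV. (W ** P)$a$l * (W ** Q l ** transpose W)$b$c)"
proof -
  have "lower3 W (\<lambda>i j k. \<Sum>l\<in>UNIV. P$i$l * Q l $j$k) a b c
     = (\<Sum>i\<in>UNIV. \<Sum>j\<in>UNIV. \<Sum>k\<in>UNIV. \<Sum>l\<in>UNIV. W$a$i * P$i$l * (W$b$j * Q l$j$k * W$c$k))"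
    unfolding lower3_def by (simp add: sum_distrib_left mult_ac)
  also have "\<dots> = (\<Sum>l\<in>UNIV. \<Sum>i\<in>UNIV. \<Sum>j\<in>UNIV. \<Sum>k\<in>UNIV. W$a$i * P$i$l * (W$b$j * Q l$j$k * W$c$k))"
    by (rule sum_rotate4)
  also have "\<dots> = (\<Sum>l\<in>UNIV. (W ** P)$a$l * (W ** Q l ** transpose W)$b$c)"
    apply (simp add: matrix_matrix_mult_def transpose_def sum_distrib_left sum_distrib_right mult_ac)
    apply (rule sum.cong[OF refl])
    apply (subst sum_rotate3) apply (rule sum.cong[OF refl])
    apply (subst sum.swap) by simp
  finally show ?thesis .
qed

text \<open>
  The values at one point of \<open>P\<^sub>0\<close>, \<open>P\<^sub>1\<close>, \<open>P\<^sub>0\<^sup>-\<^sup>1\<close> (as A, B, W) and of the partial derivatives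
  \<open>\<partial>\<^sub>lP\<^sub>0\<close>, \<open>\<partial>\<^sub>lP\<^sub>1\<close> (as \<open>dA l\<close>, \<open>dB l\<close>). The three Jacobi identities are the coefficients of
  \<open>t\<^sup>0\<close>, \<open>t\<^sup>1\<close>, \<open>t\<^sup>2\<close> in the Jacobi identity of \<open>P\<^sub>0 + t P\<^sub>1\<close>.
\<close>
locale compatible_poisson_jet =
  fixes A B W :: "real^'m^'m" and dA dB :: "'m \<Rightarrow> real^'m^'m"
  assumes W_A: "W ** A = mat 1" and A_W: "A ** W = mat 1"
    and skew_A: "transpose A = - A" and skew_B: "transpose B = - B"
    and skew_dA: "\<And>l. transpose (dA l) = - dA l" and skew_dB: "\<And>l. transpose (dB l) = - dB l"
    and jacobi_A: "\<And>i j k. (\<Sum>l\<in>UNIV. A$i$l * dA l$j$k + A$j$l * dA l$k$i + A$k$l * dA l$i$j) = 0"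
    and jacobi_mixed: "\<And>i j k. (\<Sum>l\<in>UNIV. (A$i$l * dB l$j$k + B$i$l * dA l$j$k)
          + (A$j$l * dB l$k$i + B$j$l * dA l$k$i) + (A$k$l * dB l$i$j + B$k$l * dA l$i$j)) = 0"
    and jacobi_B: "\<And>i j k. (\<Sum>l\<in>UNIV. B$i$l * dB l$j$k + B$j$l * dB l$k$i + B$k$l * dB l$i$j) = 0"
begin

definition "N = B ** W"
definition "Nadj = W ** B"

text \<open>The derivatives of W, of \<open>W B W\<close> and of N, by the product rule and \<open>dW = - W dA W\<close>.\<close>
definition "dW l = - (W ** dA l ** W)"
definition "dOmega l = dW l ** B ** W + W ** dB l ** W + W ** B ** dW l"
definition "dN l = dB l ** W + B ** dW l"

definition "adj_dB a b c = (\<Sum>l\<in>UNIV. Nadj$a$l * (W ** dB l ** W)$b$c)"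

definition "torsion i j k =
  (\<Sum>l\<in>UNIV. N$l$j * dN l$i$k - N$l$k * dN l$i$j - N$i$l * (dN j$l$k - dN k$l$j))"

lemma skew_W: "transpose W = - W"
proof -
  have "transpose W ** transpose A = mat 1"
    by (metis A_W matrix_transpose_mul transpose_mat)
  hence "(- transpose W) ** A = mat 1"
    using skew_A by (simp add: matrix_uminus_left matrix_uminus_right)
  hence "(- transpose W) ** (A ** W) = W" by (metis matrix_mul_assoc matrix_mul_lid)
  thus ?thesis using A_W by (metis add.inverse_inverse matrix_mul_rid)
qed

lemma N_entry_adj: "N$d$c = Nadj$c$d"
proof -
  have "Nadj = transpose N"
    unfolding N_def Nadj_def
    by (simp add: matrix_transpose_mul skew_W skew_B matrix_uminus_left matrix_uminus_right)
  thus ?thesis by (simp add: transpose_def)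
qed

lemma W_N: "W ** N = Nadj ** W"
  unfolding N_def Nadj_def by (simp add: matrix_mul_assoc)

lemma dOmega_expand: "dOmega a = dW a ** N + W ** dB a ** W + Nadj ** dW a"
  unfolding dOmega_def N_def Nadj_def by (simp add: matrix_mul_assoc)

lemma W_dN: "W ** dN l = dOmega l - dW l ** N"
  unfolding dOmega_expand dN_def N_def Nadj_def
  by (simp add: matrix_add_ldistrib matrix_mul_assoc)

lemma dN_expand: "dN l = dB l ** W - N ** dA l ** W"
  unfolding dN_def dW_def N_def by (simp add: matrix_uminus_right matrix_mul_assoc)

lemma dW_skew: "dW l$a$b = - dW l$b$a"
  unfolding dW_def
  by (rule skew_matrix_entry) (simp add: transpose_uminus matrix_transpose_mul skew_W skew_dA
      matrix_uminus_left matrix_uminus_right matrix_mul_assoc)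

lemma dOmega_skew: "dOmega l$a$b = - dOmega l$b$a"
  unfolding dOmega_def dW_def
  by (rule skew_matrix_entry) (simp add: transpose_uminus transpose_add transpose_diff matrix_transpose_mul skew_W
      skew_dA skew_dB skew_B matrix_uminus_left matrix_uminus_right matrix_mul_assoc algebra_simps)

text \<open>Lowering all indices of the Jacobi identities by W: W and \<open>W B W\<close> are closed 2-forms.\<close>

lemma dW_cyclic: "dW a$b$c + dW b$c$a + dW c$a$b = 0"
proof -
  let ?S = "\<lambda>i j k. \<Sum>l\<in>UNIV. A$i$l * dA l $j$k"
  have "lower3 W ?S a b c + lower3 W ?S b c a + lower3 W ?S c a b = 0"
    by (rule lower3_cyclic_sum) (use jacobi_A in \<open>simp only: sum.distrib\<close>)
  moreover have "lower3 W ?S a b c = dW a $b$c" for a b c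
    unfolding lower3_contract W_A sum_mat1_mult dW_def skew_W matrix_uminus_right by simp
  ultimately show ?thesis by (simp only:)
qed

lemma dOmega_cyclic: "dOmega a$b$c + dOmega b$c$a + dOmega c$a$b = 0"
proof -
  let ?SA = "\<lambda>i j k. \<Sum>l\<in>UNIV. A$i$l * dB l $j$k"
  let ?SB = "\<lambda>i j k. \<Sum>l\<in>UNIV. B$i$l * dA l $j$k"
  let ?G = "\<lambda>a b c. (dW a ** N)$b$c + (Nadj ** dW a)$b$c + (\<Sum>l\<in>UNIV. Nadj$a$l * dW l$b$c)"
  have "lower3 W (\<lambda>i j k. ?SA i j k + ?SB i j k) a b c
      + lower3 W (\<lambda>i j k. ?SA i j k + ?SB i j k) b c a
      + lower3 W (\<lambda>i j k. ?SA i j k + ?SB i j k) c a b = 0"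
    by (rule lower3_cyclic_sum) (use jacobi_mixed in \<open>simp only: sum.distrib\<close>)
  moreover have "lower3 W (\<lambda>i j k. ?SA i j k + ?SB i j k) a b c = - dOmega a$b$c + ?G a b c" for a b c
  proof -
    have "lower3 W ?SA a b c = - (W ** dB a ** W)$b$c"
      unfolding lower3_contract W_A sum_mat1_mult skew_W matrix_uminus_right by simp
    moreover have "lower3 W ?SB a b c = (\<Sum>l\<in>UNIV. Nadj$a$l * dW l$b$c)"
      unfolding lower3_contract skew_W matrix_uminus_right dW_def Nadj_def by simp
    ultimately show ?thesis unfolding lower3_add dOmega_expand by simp
  qed
  moreover have "?G a b c + ?G b c a + ?G c a b = 0"
  proof -
    have "?G a b c + ?G b c a + ?G c a b
      = (\<Sum>d\<in>UNIV. Nadj$a$d * (dW d$b$c + dW b$c$d + dW c$d$b)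
          + Nadj$b$d * (dW a$d$c + dW d$c$a + dW c$a$d) + Nadj$c$d * (dW a$b$d + dW b$d$a + dW d$a$b))"
      by (simp add: matrix_matrix_mult_def N_entry_adj sum.distrib distrib_left algebra_simps)
    thus ?thesis by (simp add: dW_cyclic)
  qed
  ultimately show ?thesis by simp
qed

lemma adj_dB_cyclic: "adj_dB a b c + adj_dB b c a + adj_dB c a b = 0"
proof -
  let ?S = "\<lambda>i j k. \<Sum>l\<in>UNIV. B$i$l * dB l $j$k"
  have "lower3 W ?S a b c + lower3 W ?S b c a + lower3 W ?S c a b = 0"
    by (rule lower3_cyclic_sum) (use jacobi_B in \<open>simp only: sum.distrib\<close>)
  moreover have "lower3 W ?S a b c = - adj_dB a b c" for a b c
    unfolding lower3_contract skew_W matrix_uminus_right Nadj_def adj_dB_def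
    by (simp add: sum_negf)
  ultimately show ?thesis by simp
qed

lemma lowered_torsion_expand:
  "(\<Sum>i\<in>UNIV. W$m$i * torsion i j k)
   = ((\<Sum>l\<in>UNIV. Nadj$j$l * dOmega l$m$k) - (\<Sum>l\<in>UNIV. Nadj$k$l * dOmega l$m$j)
        - (Nadj ** dOmega j)$m$k + (Nadj ** dOmega k)$m$j)
   + (- (\<Sum>l\<in>UNIV. Nadj$j$l * (dW l ** N)$m$k) + (\<Sum>l\<in>UNIV. Nadj$k$l * (dW l ** N)$m$j)
        + (Nadj ** (dW j ** N))$m$k - (Nadj ** (dW k ** N))$m$j)"
proof -
  have first: "(\<Sum>i\<in>UNIV. W$m$i * (\<Sum>l\<in>UNIV. N$l$j * dN l$i$k))
      = (\<Sum>l\<in>UNIV. Nadj$j$l * (W ** dN l)$m$k)" for j k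
    by (simp add: matrix_matrix_mult_def N_entry_adj sum_distrib_left mult_ac) (rule sum.swap)
  have second: "(\<Sum>i\<in>UNIV. W$m$i * (\<Sum>l\<in>UNIV. N$i$l * dN j$l$k)) = (W ** N ** dN j)$m$k" for j k
    by (simp add: matrix_matrix_mult_def sum_distrib_left sum_distrib_right mult_ac) (rule sum.swap)
  have W_N_dN: "W ** N ** dN j = Nadj ** (dOmega j - dW j ** N)" for j
    by (metis W_N W_dN matrix_mul_assoc)
  have "(\<Sum>i\<in>UNIV. W$m$i * torsion i j k)
      = (\<Sum>i\<in>UNIV. W$m$i * (\<Sum>l\<in>UNIV. N$l$j * dN l$i$k))
      - (\<Sum>i\<in>UNIV. W$m$i * (\<Sum>l\<in>UNIV. N$l$k * dN l$i$j))
      - (\<Sum>i\<in>UNIV. W$m$i * (\<Sum>l\<in>UNIV. N$i$l * dN j$l$k))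
      + (\<Sum>i\<in>UNIV. W$m$i * (\<Sum>l\<in>UNIV. N$i$l * dN k$l$j))"
    unfolding torsion_def
    by (simp add: sum_subtractf sum.distrib right_diff_distrib distrib_left sum_distrib_left)
  also have "\<dots> = (\<Sum>l\<in>UNIV. Nadj$j$l * (W ** dN l)$m$k) - (\<Sum>l\<in>UNIV. Nadj$k$l * (W ** dN l)$m$j)
      - (W ** N ** dN j)$m$k + (W ** N ** dN k)$m$j"
    unfolding first second ..
  finally show ?thesis
    unfolding W_N_dN W_dN matrix_diff_ldistrib
    by (simp add: sum_subtractf right_diff_distrib algebra_simps)
qed

lemma dOmega_terms:
  "(\<Sum>l\<in>UNIV. Nadj$j$l * dOmega l$m$k) - (\<Sum>l\<in>UNIV. Nadj$k$l * dOmega l$m$j)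
     - (Nadj ** dOmega j)$m$k + (Nadj ** dOmega k)$m$j
   = (\<Sum>l\<in>UNIV. Nadj$j$l * dOmega l$m$k) + (\<Sum>l\<in>UNIV. Nadj$m$l * dOmega l$k$j)
     + (\<Sum>l\<in>UNIV. Nadj$k$l * dOmega l$j$m)"
proof -
  have "(\<Sum>l\<in>UNIV. Nadj$k$l * dOmega l$j$m) = - (\<Sum>l\<in>UNIV. Nadj$k$l * dOmega l$m$j)"
    by (subst dOmega_skew) (simp add: sum_negf)
  moreover have "dOmega l$k$j = dOmega k$l$j - dOmega j$l$k" for l
    using dOmega_cyclic[of l k j] dOmega_skew[of k j l] by simp
  hence "(\<Sum>l\<in>UNIV. Nadj$m$l * dOmega l$k$j) = (Nadj ** dOmega k)$m$j - (Nadj ** dOmega j)$m$k"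
    by (simp add: matrix_matrix_mult_def right_diff_distrib sum_subtractf)
  ultimately show ?thesis by simp
qed

lemma dW_terms:
  "- (\<Sum>l\<in>UNIV. Nadj$j$l * (dW l ** N)$m$k) + (\<Sum>l\<in>UNIV. Nadj$k$l * (dW l ** N)$m$j)
     + (Nadj ** (dW j ** N))$m$k - (Nadj ** (dW k ** N))$m$j
   = - (\<Sum>l\<in>UNIV. Nadj$j$l * (dW l ** N)$m$k) - (\<Sum>l\<in>UNIV. Nadj$j$l * (Nadj ** dW l)$m$k)
     - (\<Sum>l\<in>UNIV. Nadj$m$l * (dW l ** N)$k$j) - (\<Sum>l\<in>UNIV. Nadj$m$l * (Nadj ** dW l)$k$j)
     - (\<Sum>l\<in>UNIV. Nadj$k$l * (dW l ** N)$j$m) - (\<Sum>l\<in>UNIV. Nadj$k$l * (Nadj ** dW l)$j$m)"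
    (is "?lhs = ?rhs")
proof -
  let ?D = "\<lambda>a b f. \<Sum>p\<in>UNIV. \<Sum>q\<in>UNIV. Nadj$a$p * Nadj$b$q * f p q"
  have expand:
    "(\<Sum>l\<in>UNIV. Nadj$j$l * (dW l ** N)$m$k) = ?D j k (\<lambda>p q. dW p$m$q)"
    "(\<Sum>l\<in>UNIV. Nadj$k$l * (dW l ** N)$m$j) = ?D j k (\<lambda>p q. dW q$m$p)"
    "(Nadj ** (dW j ** N))$m$k = ?D m k (\<lambda>p q. dW j$p$q)"
    "(Nadj ** (dW k ** N))$m$j = ?D m j (\<lambda>p q. dW k$p$q)"
    "(\<Sum>l\<in>UNIV. Nadj$j$l * (Nadj ** dW l)$m$k) = ?D m j (\<lambda>p q. dW q$p$k)"
    "(\<Sum>l\<in>UNIV. Nadj$m$l * (dW l ** N)$k$j) = ?D m j (\<lambda>p q. dW p$k$q)"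
    "(\<Sum>l\<in>UNIV. Nadj$m$l * (Nadj ** dW l)$k$j) = ?D m k (\<lambda>p q. dW p$q$j)"
    "(\<Sum>l\<in>UNIV. Nadj$k$l * (dW l ** N)$j$m) = ?D m k (\<lambda>p q. dW q$j$p)"
    "(\<Sum>l\<in>UNIV. Nadj$k$l * (Nadj ** dW l)$j$m) = ?D j k (\<lambda>p q. dW q$p$m)"
    by (simp_all add: matrix_matrix_mult_def N_entry_adj sum_distrib_left mult_ac)
      (rule sum.swap)+
  have D_add: "?D a b f + ?D a b g = ?D a b (\<lambda>p q. f p q + g p q)"
    and D_uminus: "- ?D a b f = ?D a b (\<lambda>p q. - f p q)" for a b f g
    by (simp_all add: sum.distrib distrib_left sum_negf)
  have "?D j k (\<lambda>p q. dW q$m$p) + ?D j k (\<lambda>p q. dW q$p$m) = 0"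
    unfolding D_add by (simp add: dW_skew[of _ _ m])
  moreover have "?D m k (\<lambda>p q. dW j$p$q) + ?D m k (\<lambda>p q. dW p$q$j) + ?D m k (\<lambda>p q. dW q$j$p) = 0"
    unfolding D_add by (simp add: dW_cyclic)
  moreover have "- ?D m j (\<lambda>p q. dW k$p$q) + ?D m j (\<lambda>p q. dW q$p$k) + ?D m j (\<lambda>p q. dW p$k$q) = 0"
  proof -
    have "- dW k$p$q + dW q$p$k + dW p$k$q = 0" for p q
      using dW_cyclic[of p k q] dW_skew[of k q p] by simp
    thus ?thesis unfolding D_uminus D_add by simp
  qed
  ultimately show ?thesis unfolding expand by simp
qed

lemma adj_dB_cyclic_expand:
  "adj_dB j m k + adj_dB m k j + adj_dB k j m
   = ((\<Sum>l\<in>UNIV. Nadj$j$l * dOmega l$m$k) + (\<Sum>l\<in>UNIV. Nadj$m$l * dOmega l$k$j)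
        + (\<Sum>l\<in>UNIV. Nadj$k$l * dOmega l$j$m))
   + (- (\<Sum>l\<in>UNIV. Nadj$j$l * (dW l ** N)$m$k) - (\<Sum>l\<in>UNIV. Nadj$j$l * (Nadj ** dW l)$m$k)
      - (\<Sum>l\<in>UNIV. Nadj$m$l * (dW l ** N)$k$j) - (\<Sum>l\<in>UNIV. Nadj$m$l * (Nadj ** dW l)$k$j)
      - (\<Sum>l\<in>UNIV. Nadj$k$l * (dW l ** N)$j$m) - (\<Sum>l\<in>UNIV. Nadj$k$l * (Nadj ** dW l)$j$m))"
proof -
  have W_dB_W: "W ** dB l ** W = dOmega l - dW l ** N - Nadj ** dW l" for l
    unfolding dOmega_expand by simp
  show ?thesis
    unfolding adj_dB_def W_dB_W
    by (simp add: sum_subtractf sum.distrib right_diff_distrib algebra_simps)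
qed

lemma torsion_eq_0: "torsion i j k = 0"
proof -
  have lowered: "(\<Sum>i\<in>UNIV. W$m$i * torsion i j k) = 0" for m
    unfolding lowered_torsion_expand dOmega_terms dW_terms adj_dB_cyclic_expand[symmetric]
    using adj_dB_cyclic[of j m k] by simp
  have "torsion i j k = (\<Sum>i'\<in>UNIV. (A ** W)$i$i' * torsion i' j k)"
    by (simp add: A_W sum_mat1_mult)
  also have "\<dots> = (\<Sum>m\<in>UNIV. A$i$m * (\<Sum>i'\<in>UNIV. W$m$i' * torsion i' j k))"
    by (simp add: matrix_matrix_mult_def sum_distrib_left sum_distrib_right mult_ac) (rule sum.swap)
  finally show ?thesis unfolding lowered by simp
qed

lemma trace_dN_contraction:
  assumes KN: "K ** N = N ** K"
  shows "(\<Sum>l\<in>UNIV. N$l$j * trace (K ** dN l)) = trace (K ** N ** dN j)"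
proof -
  have "(\<Sum>i\<in>UNIV. \<Sum>k\<in>UNIV. torsion i j k * K$k$i) =
      (\<Sum>i\<in>UNIV. \<Sum>k\<in>UNIV. \<Sum>l\<in>UNIV. N$l$j * dN l$i$k * K$k$i)
    - (\<Sum>i\<in>UNIV. \<Sum>k\<in>UNIV. \<Sum>l\<in>UNIV. N$l$k * dN l$i$j * K$k$i)
    - (\<Sum>i\<in>UNIV. \<Sum>k\<in>UNIV. \<Sum>l\<in>UNIV. N$i$l * dN j$l$k * K$k$i)
    + (\<Sum>i\<in>UNIV. \<Sum>k\<in>UNIV. \<Sum>l\<in>UNIV. N$i$l * dN k$l$j * K$k$i)"
    unfolding torsion_def
    by (simp add: sum_distrib_right sum_distrib_left sum_subtractf sum.distrib algebra_simps)
  moreover have "(\<Sum>i\<in>UNIV. \<Sum>k\<in>UNIV. \<Sum>l\<in>UNIV. N$l$j * dN l$i$k * K$k$i)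
      = (\<Sum>l\<in>UNIV. N$l$j * trace (K ** dN l))"
    unfolding trace_def matrix_matrix_mult_def
    apply (simp add: sum_distrib_left mult_ac)
    apply (subst sum_rotate3) apply (rule sum.cong[OF refl]) by (rule sum.swap)
  moreover have "(\<Sum>i\<in>UNIV. \<Sum>k\<in>UNIV. \<Sum>l\<in>UNIV. N$l$k * dN l$i$j * K$k$i)
      = (\<Sum>l\<in>UNIV. \<Sum>i\<in>UNIV. (N ** K)$l$i * dN l$i$j)"
    unfolding matrix_matrix_mult_def
    apply (simp add: sum_distrib_right sum_distrib_left mult_ac)
    apply (subst sum_rotate3) by (simp add: mult_ac)
  moreover have "(\<Sum>i\<in>UNIV. \<Sum>k\<in>UNIV. \<Sum>l\<in>UNIV. N$i$l * dN j$l$k * K$k$i) = trace (K ** N ** dN j)"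
    unfolding trace_def matrix_matrix_mult_def
    apply (simp add: sum_distrib_right sum_distrib_left mult_ac)
    apply (rule sym) apply (subst sum_rotate3) by (simp add: mult_ac)
  moreover have "(\<Sum>i\<in>UNIV. \<Sum>k\<in>UNIV. \<Sum>l\<in>UNIV. N$i$l * dN k$l$j * K$k$i)
      = (\<Sum>k\<in>UNIV. \<Sum>l\<in>UNIV. (K ** N)$k$l * dN k$l$j)"
    unfolding matrix_matrix_mult_def
    apply (simp add: sum_distrib_right sum_distrib_left mult_ac)
    apply (rule sym) apply (subst sum_rotate3) by (simp add: mult_ac)
  ultimately show ?thesis using KN by (simp add: torsion_eq_0)
qed

end

lemma partial_eq_derivative: "(f has_derivative f') (at x) \<Longrightarrow> partial f x l = f' (axis l 1)"
  unfolding partial_def by (simp add: frechet_derivative_at[symmetric])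

lemma smooth_on_differentiable: "smooth_on S f \<Longrightarrow> x \<in> S \<Longrightarrow> f differentiable (at x)"
  by (erule smooth_on.cases) auto

lemma partial_cong_open:
  assumes "open S" "x \<in> S" "\<And>y. y \<in> S \<Longrightarrow> f y = g y"
  shows "partial f x l = partial g x l"
proof -
  have "(f has_derivative D) (at x) \<longleftrightarrow> (g has_derivative D) (at x)" for D
    using has_derivative_transform_within_open[of f D x UNIV S g]
      has_derivative_transform_within_open[of g D x UNIV S f] assms
    by auto
  thus ?thesis unfolding partial_def frechet_derivative_def by simp
qed

lemmas has_frechet_derivative = frechet_derivative_works[THEN iffD1]

lemma partial_add: "f differentiable (at x) \<Longrightarrow> g differentiable (at x) \<Longrightarrow>
  partial (\<lambda>y. f y + g y) x l = partial f x l + partial g x l"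
  by (subst partial_eq_derivative[OF has_derivative_add[OF has_frechet_derivative has_frechet_derivative]])
    (auto simp: partial_def)

lemma partial_diff: "f differentiable (at x) \<Longrightarrow> g differentiable (at x) \<Longrightarrow>
  partial (\<lambda>y. f y - g y) x l = partial f x l - partial g x l"
  by (subst partial_eq_derivative[OF has_derivative_diff[OF has_frechet_derivative has_frechet_derivative]])
    (auto simp: partial_def)

lemma partial_uminus: "f differentiable (at x) \<Longrightarrow> partial (\<lambda>y. - f y) x l = - partial f x l"
  by (subst partial_eq_derivative[OF has_derivative_minus[OF has_frechet_derivative]])
    (auto simp: partial_def)

lemma partial_cmult: "f differentiable (at x) \<Longrightarrow> partial (\<lambda>y. c * f y) x l = c * partial f x l"
  by (subst partial_eq_derivative[OF has_derivative_mult_right[OF has_frechet_derivative]])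
    (auto simp: partial_def)

lemma partial_const: "partial (\<lambda>y. c) x l = 0"
  unfolding partial_def by simp

lemma dfun_const: "dfun (\<lambda>y. c) x = 0"
  by (simp add: dfun_def partial_const vec_eq_iff)

lemma partial_mult: "f differentiable (at x) \<Longrightarrow> g differentiable (at x) \<Longrightarrow>
  partial (\<lambda>y. f y * g y) x l = f x * partial g x l + partial f x l * g x"
  by (subst partial_eq_derivative[OF has_derivative_mult[OF has_frechet_derivative has_frechet_derivative]])
    (auto simp: partial_def)

lemma partial_divide: "f differentiable (at x) \<Longrightarrow> g differentiable (at x) \<Longrightarrow> g x \<noteq> 0 \<Longrightarrow>
  partial (\<lambda>y. f y / g y) x l = partial f x l / g x - f x * partial g x l / (g x)\<^sup>2"
  by (subst partial_eq_derivative[OF has_derivative_divide[OF has_frechet_derivative has_frechet_derivative]])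
    (auto simp: partial_def power2_eq_square field_simps)

lemma partial_sum: "finite I \<Longrightarrow> (\<And>i. i \<in> I \<Longrightarrow> f i differentiable (at x)) \<Longrightarrow>
  partial (\<lambda>y. \<Sum>i\<in>I. f i y) x l = (\<Sum>i\<in>I. partial (f i) x l)"
  by (subst partial_eq_derivative[OF has_derivative_sum[OF has_frechet_derivative]])
    (auto simp: partial_def)

definition partial_mat :: "(real^'m \<Rightarrow> real^'n^'k) \<Rightarrow> real^'m \<Rightarrow> 'm \<Rightarrow> real^'n^'k" where
  "partial_mat M x l = (\<chi> i j. partial (\<lambda>y. M y $ i $ j) x l)"

lemma partial_mat_scaleR_diff:
  assumes "\<And>i j. (\<lambda>y. M y$i$j) differentiable (at x)" "\<And>i j. (\<lambda>y. M' y$i$j) differentiable (at x)"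
  shows "partial_mat (\<lambda>y. t *\<^sub>R M y - M' y) x l = t *\<^sub>R partial_mat M x l - partial_mat M' x l"
proof -
  have "partial (\<lambda>y. t * M y$i$j - M' y$i$j) x l = t * partial (\<lambda>y. M y$i$j) x l - partial (\<lambda>y. M' y$i$j) x l"
    for i j
    using partial_diff[OF _ assms(2), of "\<lambda>y. t * M y$i$j"] partial_cmult[OF assms(1)] assms(1)
    by (simp add: differentiable_cmult_left_iff)
  thus ?thesis by (simp add: partial_mat_def vec_eq_iff)
qed

lemma has_derivative_det:
  fixes M :: "'a::real_normed_vector \<Rightarrow> real^'n^'n"
  assumes d: "\<And>i j. ((\<lambda>y. M y $ i $ j) has_derivative M' i j) (at x)"
  shows "((\<lambda>y. det (M y)) has_derivative
     (\<lambda>h. \<Sum>i\<in>UNIV. det (\<chi> r. if r = i then (\<chi> c. M' i c h) else M x $ r))) (at x)"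
proof -
  let ?P = "{p. p permutes (UNIV::'n set)}"
  let ?D = "\<lambda>h. \<Sum>p\<in>?P. of_int (sign p) * (\<Sum>i\<in>UNIV. M' i (p i) h * (\<Prod>j\<in>UNIV - {i}. M x $ j $ p j))"
  have "((\<lambda>y. \<Sum>p\<in>?P. of_int (sign p) * (\<Prod>i\<in>UNIV. M y $ i $ p i)) has_derivative ?D) (at x)"
    by (intro has_derivative_sum has_derivative_mult_right has_derivative_prod d)
  moreover have "?D h = (\<Sum>i\<in>UNIV. det (\<chi> r. if r = i then (\<chi> c. M' i c h) else M x $ r))" for h
  proof -
    have "det (\<chi> r. if r = i then (\<chi> c. M' i c h) else M x $ r)
        = (\<Sum>p\<in>?P. of_int (sign p) * (M' i (p i) h * (\<Prod>j\<in>UNIV - {i}. M x $ j $ p j)))" for i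
      unfolding det_def
    proof (rule sum.cong[OF refl])
      fix p
      have "(\<Prod>r\<in>UNIV. (\<chi> r. if r = i then (\<chi> c. M' i c h) else M x $ r) $ r $ p r)
          = (\<Prod>r\<in>UNIV. if r = i then M' i (p r) h else M x $ r $ p r)"
        by (rule prod.cong) auto
      also have "\<dots> = M' i (p i) h * (\<Prod>j\<in>UNIV - {i}. M x $ j $ p j)"
        by (subst prod.remove[of UNIV i]) (auto intro!: prod.cong)
      finally show "of_int (sign p) * (\<Prod>r\<in>UNIV. (\<chi> r. if r = i then (\<chi> c. M' i c h) else M x $ r) $ r $ p r)
         = of_int (sign p) * (M' i (p i) h * (\<Prod>j\<in>UNIV - {i}. M x $ j $ p j))" by simp
    qed
    thus ?thesis by (simp add: sum_distrib_left) (rule sum.swap)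
  qed
  ultimately show ?thesis unfolding det_def by simp
qed

lemma det_replace_row_lincomb:
  fixes M :: "real^'n^'n"
  shows "det (\<chi> r. if r = i then (\<Sum>k\<in>UNIV. c k *s M$k) else M$r) = c i * det M"
proof -
  have "det (\<chi> r. if r = i then (\<Sum>k\<in>UNIV. c k *s M$k) else M$r)
      = (\<Sum>k\<in>UNIV. c k * det (\<chi> r. if r = i then M$k else M$r))"
    by (subst det_linear_row_sum) (simp_all add: det_row_mul)
  also have "\<dots> = (\<Sum>k\<in>UNIV. if k = i then c k * det M else 0)"
  proof (rule sum.cong[OF refl])
    fix k
    show "c k * det (\<chi> r. if r = i then M$k else M$r) = (if k = i then c k * det M else 0)"
    proof (cases "k = i")
      case True
      hence "(\<chi> r. if r = i then M$k else M$r) = M" by (simp add: vec_eq_iff)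
      thus ?thesis using True by simp
    next
      case False
      have "det (\<chi> r. if r = i then M$k else M$r) = 0"
        by (rule det_identical_rows[of i k]) (use False in \<open>auto simp: row_def vec_eq_iff\<close>)
      thus ?thesis using False by simp
    qed
  qed
  finally show ?thesis by simp
qed

lemma matrix_mult_row: "(Y ** M)$i = (\<Sum>k\<in>UNIV. Y$i$k *s (M::real^'n^'n)$k)"
  by (simp add: matrix_matrix_mult_def vec_eq_iff sum_component mult.commute)

lemma sum_det_replace_row:
  fixes M D X :: "real^'n^'n"
  assumes "X ** M = mat 1"
  shows "(\<Sum>i\<in>UNIV. det (\<chi> r. if r = i then D$i else M $ r)) = det M * trace (D ** X)"
proof -
  have "D = (D ** X) ** M" using assms by (simp add: matrix_mul_assoc[symmetric])
  hence "D$i = (\<Sum>k\<in>UNIV. (D ** X)$i$k *s M$k)" for i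
    by (metis matrix_mult_row)
  hence "(\<Sum>i\<in>UNIV. det (\<chi> r. if r = i then D$i else M $ r)) = (\<Sum>i\<in>UNIV. (D ** X)$i$i * det M)"
    by (intro sum.cong refl) (simp only: det_replace_row_lincomb)
  thus ?thesis by (simp add: trace_def sum_distrib_left mult.commute)
qed

lemma partial_det:
  fixes M :: "real^'m \<Rightarrow> real^'n^'n"
  assumes d: "\<And>i j. (\<lambda>y. M y$i$j) differentiable (at x)" and X: "X ** M x = mat 1"
  shows "partial (\<lambda>y. det (M y)) x l = det (M x) * trace (partial_mat M x l ** X)"
proof -
  have row: "partial_mat M x l $ i = (\<chi> c. frechet_derivative (\<lambda>y. M y$i$c) (at x) (axis l 1))" for i
    by (simp add: partial_mat_def partial_def)
  have "partial (\<lambda>y. det (M y)) x l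
      = (\<Sum>i\<in>UNIV. det (\<chi> r. if r = i then (partial_mat M x l)$i else M x $ r))"
    unfolding row by (rule partial_eq_derivative[OF has_derivative_det[OF has_frechet_derivative[OF d]]])
  also have "\<dots> = det (M x) * trace (partial_mat M x l ** X)" by (rule sum_det_replace_row[OF X])
  finally show ?thesis .
qed

lemma differentiable_det:
  fixes M :: "real^'m \<Rightarrow> real^'n^'n"
  assumes "\<And>i j. (\<lambda>y. M y$i$j) differentiable (at x)"
  shows "(\<lambda>y. det (M y)) differentiable (at x)"
  using has_derivative_det[OF has_frechet_derivative[OF assms]] by (rule differentiableI)

lemma poisson_differentiable: "is_poisson U P \<Longrightarrow> x \<in> U \<Longrightarrow> (\<lambda>y. P y $ i $ j) differentiable (at x)"
  unfolding is_poisson_def by (auto intro: smooth_on_differentiable)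

lemma poisson_skew: "is_poisson U P \<Longrightarrow> x \<in> U \<Longrightarrow> transpose (P x) = - P x"
  unfolding is_poisson_def by blast

lemma poisson_jacobi: "is_poisson U P \<Longrightarrow> x \<in> U \<Longrightarrow>
  (\<Sum>l\<in>UNIV. P x $ i $ l * partial_mat P x l $ j $ k + P x $ j $ l * partial_mat P x l $ k $ i
     + P x $ k $ l * partial_mat P x l $ i $ j) = 0"
  unfolding is_poisson_def partial_mat_def by simp

lemma poisson_partial_mat_skew:
  assumes "open U" "x \<in> U" and P: "is_poisson U P"
  shows "transpose (partial_mat P x l) = - partial_mat P x l"
proof -
  have swap: "partial (\<lambda>y. P y$j$i) x l = - partial (\<lambda>y. P y$i$j) x l" for i j
  proof -
    have "partial (\<lambda>y. P y$j$i) x l = partial (\<lambda>y. - P y$i$j) x l"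
      by (rule partial_cong_open[OF assms(1,2)]) (rule skew_matrix_entry[OF poisson_skew[OF P]])
    also have "\<dots> = - partial (\<lambda>y. P y$i$j) x l"
      by (rule partial_uminus[OF poisson_differentiable[OF P assms(2)]])
    finally show ?thesis .
  qed
  have "transpose (partial_mat P x l) $ i $ j = (- partial_mat P x l) $ i $ j" for i j
    using swap[of j i] by (simp add: partial_mat_def transpose_def)
  thus ?thesis by (simp add: vec_eq_iff)
qed

lemma compatible_poisson_mixed_jacobi:
  assumes P0: "is_poisson U P0" and P1: "is_poisson U P1" and C: "compatible_poisson U P0 P1"
    and x: "x \<in> U"
  shows "(\<Sum>l\<in>UNIV. (P0 x$i$l * partial_mat P1 x l$j$k + P1 x$i$l * partial_mat P0 x l$j$k)
     + (P0 x$j$l * partial_mat P1 x l$k$i + P1 x$j$l * partial_mat P0 x l$k$i)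
     + (P0 x$k$l * partial_mat P1 x l$i$j + P1 x$k$l * partial_mat P0 x l$i$j)) = 0"
proof -
  let ?a = "\<lambda>i j l. partial_mat P0 x l$i$j" and ?b = "\<lambda>i j l. partial_mat P1 x l$i$j"
  have sum: "is_poisson U (\<lambda>x. P0 x + 1 *\<^sub>R P1 x)"
    using C unfolding compatible_poisson_def by blast
  have "partial_mat (\<lambda>x. P0 x + 1 *\<^sub>R P1 x) x l $ i $ j = ?a i j l + ?b i j l" for i j l
    using partial_add[OF poisson_differentiable[OF P0 x] poisson_differentiable[OF P1 x]]
    by (simp add: partial_mat_def)
  hence "0 = (\<Sum>l\<in>UNIV. (P0 x$i$l + P1 x$i$l) * (?a j k l + ?b j k l)
      + (P0 x$j$l + P1 x$j$l) * (?a k i l + ?b k i l) + (P0 x$k$l + P1 x$k$l) * (?a i j l + ?b i j l))"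
    using poisson_jacobi[OF sum x, of i j k] by simp
  also have "\<dots> = (\<Sum>l\<in>UNIV. P0 x$i$l * ?a j k l + P0 x$j$l * ?a k i l + P0 x$k$l * ?a i j l)
     + (\<Sum>l\<in>UNIV. (P0 x$i$l * ?b j k l + P1 x$i$l * ?a j k l) + (P0 x$j$l * ?b k i l + P1 x$j$l * ?a k i l)
                   + (P0 x$k$l * ?b i j l + P1 x$k$l * ?a i j l))
     + (\<Sum>l\<in>UNIV. P1 x$i$l * ?b j k l + P1 x$j$l * ?b k i l + P1 x$k$l * ?b i j l)"
    unfolding sum.distrib[symmetric] by (rule sum.cong) (simp_all add: algebra_simps)
  finally show ?thesis using poisson_jacobi[OF P0 x, of i j k] poisson_jacobi[OF P1 x, of i j k] by simp
qed

locale poisson_pencil =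
  fixes U :: "(real^'m) set" and P0 P1 :: "real^'m \<Rightarrow> real^'m^'m"
  assumes open_U: "open U" and poisson_P0: "is_poisson U P0" and poisson_P1: "is_poisson U P1"
    and compatible: "compatible_poisson U P0 P1" and invertible_P0: "\<forall>x\<in>U. invertible (P0 x)"
begin

lemma jet_at:
  assumes x: "x \<in> U"
  shows "compatible_poisson_jet (P0 x) (P1 x) (matrix_inv (P0 x)) (partial_mat P0 x) (partial_mat P1 x)"
proof
  show "matrix_inv (P0 x) ** P0 x = mat 1" "P0 x ** matrix_inv (P0 x) = mat 1"
    using invertible_matrix_inv invertible_P0 x by auto
  show "transpose (P0 x) = - P0 x" "transpose (P1 x) = - P1 x"
    using poisson_skew poisson_P0 poisson_P1 x by auto
  show "\<And>l. transpose (partial_mat P0 x l) = - partial_mat P0 x l"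
    "\<And>l. transpose (partial_mat P1 x l) = - partial_mat P1 x l"
    using poisson_partial_mat_skew[OF open_U x] poisson_P0 poisson_P1 by auto
  show "\<And>i j k. (\<Sum>l\<in>UNIV. P0 x$i$l * partial_mat P0 x l$j$k + P0 x$j$l * partial_mat P0 x l$k$i
      + P0 x$k$l * partial_mat P0 x l$i$j) = 0"
    by (rule poisson_jacobi[OF poisson_P0 x])
  show "\<And>i j k. (\<Sum>l\<in>UNIV. P1 x$i$l * partial_mat P1 x l$j$k + P1 x$j$l * partial_mat P1 x l$k$i
      + P1 x$k$l * partial_mat P1 x l$i$j) = 0"
    by (rule poisson_jacobi[OF poisson_P1 x])
  show "\<And>i j k. (\<Sum>l\<in>UNIV. (P0 x$i$l * partial_mat P1 x l$j$k + P1 x$i$l * partial_mat P0 x l$j$k)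
      + (P0 x$j$l * partial_mat P1 x l$k$i + P1 x$j$l * partial_mat P0 x l$k$i)
      + (P0 x$k$l * partial_mat P1 x l$i$j + P1 x$k$l * partial_mat P0 x l$i$j)) = 0"
    by (rule compatible_poisson_mixed_jacobi[OF poisson_P0 poisson_P1 compatible x])
qed

end

text \<open>\<open>\<partial>\<^sub>lN\<close>, computed formally from \<open>N = P\<^sub>1 P\<^sub>0\<^sup>-\<^sup>1\<close>.\<close>
definition recursion_op_deriv ::
  "(real^'m \<Rightarrow> real^'m^'m) \<Rightarrow> (real^'m \<Rightarrow> real^'m^'m) \<Rightarrow> real^'m \<Rightarrow> 'm \<Rightarrow> real^'m^'m" where
  "recursion_op_deriv P0 P1 x l =
     partial_mat P1 x l ** matrix_inv (P0 x) - recursion_op P0 P1 x ** partial_mat P0 x l ** matrix_inv (P0 x)"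

lemma trace_resolvent_deriv:
  fixes B W K dA dB :: "real^'m^'m"
  assumes K: "K ** (t *\<^sub>R mat 1 - B ** W) = mat 1"
  shows "trace ((t *\<^sub>R dA - dB) ** (W ** K)) - trace (dA ** W)
    = - trace (K ** (dB ** W - B ** W ** dA ** W))"
proof -
  have "t *\<^sub>R K - K ** (B ** W) = mat 1"
    using K by (simp add: matrix_diff_ldistrib matrix_scalar_ac)
  hence K_N: "K ** (B ** W) = t *\<^sub>R K - mat 1" by (simp add: algebra_simps)
  have "trace (K ** (dB ** W - B ** W ** dA ** W))
      = trace (K ** dB ** W) - trace ((K ** (B ** W)) ** (dA ** W))"
    by (simp add: matrix_diff_ldistrib trace_sub matrix_mul_assoc)
  also have "\<dots> = trace (K ** dB ** W) - t * trace (K ** (dA ** W)) + trace (dA ** W)"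
    unfolding K_N by (simp add: matrix_diff_rdistrib scalar_matrix_assoc[symmetric] trace_sub trace_scaleR)
  finally show ?thesis
    by (simp add: matrix_diff_rdistrib scalar_matrix_assoc[symmetric] trace_sub trace_scaleR
        matrix_mul_assoc trace_mul_sym[of _ K])
qed

lemma char_recursion_op_mult:
  assumes "invertible (P0 x)"
  shows "(t *\<^sub>R mat 1 - recursion_op P0 P1 x) ** P0 x = t *\<^sub>R P0 x - P1 x"
  using invertible_matrix_inv(2)[OF assms]
  by (simp add: recursion_op_def matrix_diff_rdistrib scalar_matrix_assoc[symmetric]
      matrix_mul_assoc[symmetric])

lemma det_char_recursion_op:
  assumes "invertible (P0 x)"
  shows "det (t *\<^sub>R mat 1 - recursion_op P0 P1 x) = det (t *\<^sub>R P0 x - P1 x) / det (P0 x)"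
proof -
  have "det (P0 x) \<noteq> 0" using assms by (simp add: invertible_det_nz)
  moreover have "det (t *\<^sub>R mat 1 - recursion_op P0 P1 x) * det (P0 x) = det (t *\<^sub>R P0 x - P1 x)"
    using char_recursion_op_mult assms by (metis det_mul)
  ultimately show ?thesis by (simp add: field_simps)
qed

lemma partial_det_char_recursion_op:
  assumes U: "open U" "x \<in> U" and inv: "\<forall>y\<in>U. invertible (P0 y)"
    and dP0: "\<And>i j. (\<lambda>y. P0 y$i$j) differentiable (at x)"
    and dP1: "\<And>i j. (\<lambda>y. P1 y$i$j) differentiable (at x)"
    and nz: "det (t *\<^sub>R mat 1 - recursion_op P0 P1 x) \<noteq> 0"
  shows "partial (\<lambda>y. det (t *\<^sub>R mat 1 - recursion_op P0 P1 y)) x l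
    = - det (t *\<^sub>R mat 1 - recursion_op P0 P1 x)
        * trace (matrix_inv (t *\<^sub>R mat 1 - recursion_op P0 P1 x) ** recursion_op_deriv P0 P1 x l)"
proof -
  let ?R = "t *\<^sub>R mat 1 - recursion_op P0 P1 x"
  let ?f = "\<lambda>y. det (t *\<^sub>R P0 y - P1 y)" and ?g = "\<lambda>y. det (P0 y)"
  define W K dA dB where "W = matrix_inv (P0 x)" and "K = matrix_inv ?R"
    and "dA = partial_mat P0 x l" and "dB = partial_mat P1 x l"
  have W: "W ** P0 x = mat 1" using invertible_matrix_inv inv U unfolding W_def by auto
  have K: "K ** ?R = mat 1"
    using invertible_matrix_inv nz unfolding K_def by (auto simp: invertible_det_nz)
  have g_nz: "?g x \<noteq> 0" using inv U by (simp add: invertible_det_nz)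
  have dpencil: "\<And>i j. (\<lambda>y. (t *\<^sub>R P0 y - P1 y)$i$j) differentiable (at x)"
    using dP0 dP1 by simp
  have "(W ** K) ** (t *\<^sub>R P0 x - P1 x) = W ** (K ** ?R) ** P0 x"
    using char_recursion_op_mult inv U by (metis matrix_mul_assoc)
  hence WK: "(W ** K) ** (t *\<^sub>R P0 x - P1 x) = mat 1" using K W by simp
  have "partial_mat (\<lambda>y. t *\<^sub>R P0 y - P1 y) x l = t *\<^sub>R dA - dB"
    unfolding dA_def dB_def by (rule partial_mat_scaleR_diff[OF dP0 dP1])
  hence f': "partial ?f x l = ?f x * trace ((t *\<^sub>R dA - dB) ** (W ** K))"
    using partial_det[OF dpencil WK] by simp
  have g': "partial ?g x l = ?g x * trace (dA ** W)"
    using partial_det[OF dP0 W] unfolding dA_def .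
  have "partial (\<lambda>y. det (t *\<^sub>R mat 1 - recursion_op P0 P1 y)) x l = partial (\<lambda>y. ?f y / ?g y) x l"
    by (rule partial_cong_open[OF U]) (simp add: det_char_recursion_op inv)
  also have "\<dots> = partial ?f x l / ?g x - ?f x * partial ?g x l / (?g x)\<^sup>2"
    by (rule partial_divide[OF differentiable_det[OF dpencil] differentiable_det[OF dP0] g_nz])
  also have "\<dots> = det ?R * (trace ((t *\<^sub>R dA - dB) ** (W ** K)) - trace (dA ** W))"
    using g_nz inv U(2) unfolding f' g' by (simp add: det_char_recursion_op power2_eq_square field_simps)
  also have "\<dots> = - det ?R * trace (K ** recursion_op_deriv P0 P1 x l)"
    using trace_resolvent_deriv[OF K[unfolded recursion_op_def]]
    by (simp add: recursion_op_deriv_def recursion_op_def W_def dA_def dB_def matrix_mul_assoc)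
  finally show ?thesis unfolding K_def .
qed

context poisson_pencil
begin

lemma recursion_adj_dfun_det_char:
  assumes x: "x \<in> U" and nz: "det (t *\<^sub>R mat 1 - recursion_op P0 P1 x) \<noteq> 0"
  defines "p \<equiv> \<lambda>y. det (t *\<^sub>R mat 1 - recursion_op P0 P1 y)"
  shows "recursion_adj P0 P1 x *v dfun p x
    = t *\<^sub>R dfun p x + p x *\<^sub>R (\<chi> l. trace (recursion_op_deriv P0 P1 x l))"
proof -
  interpret compatible_poisson_jet "P0 x" "P1 x" "matrix_inv (P0 x)" "partial_mat P0 x" "partial_mat P1 x"
    by (rule jet_at[OF x])
  have N: "N = recursion_op P0 P1 x" unfolding N_def recursion_op_def ..
  have Nadj: "Nadj = recursion_adj P0 P1 x" unfolding Nadj_def recursion_adj_def ..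
  have dN: "dN l = recursion_op_deriv P0 P1 x l" for l
    unfolding dN_expand recursion_op_deriv_def N ..
  define K where "K = matrix_inv (t *\<^sub>R mat 1 - N)"
  have "K ** (t *\<^sub>R mat 1 - N) = mat 1" "(t *\<^sub>R mat 1 - N) ** K = mat 1"
    using invertible_matrix_inv nz unfolding K_def N by (auto simp: invertible_det_nz)
  hence K_N: "K ** N = t *\<^sub>R K - mat 1" and N_K: "N ** K = t *\<^sub>R K - mat 1"
    by (simp_all add: matrix_diff_ldistrib matrix_diff_rdistrib matrix_scalar_ac
        scalar_matrix_assoc[symmetric] algebra_simps)
  have p': "partial p x l = - p x * trace (K ** dN l)" for l
    unfolding p_def K_def N dN
    by (rule partial_det_char_recursion_op[OF open_U x _ _ _ nz])
      (use invertible_P0 poisson_differentiable poisson_P0 poisson_P1 x in auto)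
  have "(\<Sum>l\<in>UNIV. N $ l $ j * trace (K ** dN l)) = trace (K ** N ** dN j)" for j
    by (rule trace_dN_contraction) (simp add: K_N N_K)
  also have "trace (K ** N ** dN j) = t * trace (K ** dN j) - trace (dN j)" for j
    unfolding K_N by (simp add: matrix_diff_rdistrib scalar_matrix_assoc[symmetric] trace_sub trace_scaleR)
  finally have contraction:
    "(\<Sum>l\<in>UNIV. Nadj $ j $ l * trace (K ** dN l)) = t * trace (K ** dN j) - trace (dN j)" for j
    unfolding N_entry_adj .
  have "(\<Sum>l\<in>UNIV. Nadj $ j $ l * partial p x l) = - p x * (\<Sum>l\<in>UNIV. Nadj $ j $ l * trace (K ** dN l))"
    for j by (simp add: p' sum_distrib_left mult_ac)
  hence "(\<Sum>l\<in>UNIV. Nadj $ j $ l * partial p x l) = t * partial p x j + p x * trace (dN j)" for j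
    unfolding contraction p' by (simp add: algebra_simps)
  thus ?thesis
    unfolding Nadj[symmetric] dN[symmetric] by (simp add: vec_eq_iff matrix_vector_mult_def dfun_def)
qed

lemma recursion_adj_dfun_sqrt_det_char:
  assumes V: "open V" "V \<subseteq> U" "x \<in> V"
    and f: "f differentiable (at x)" "f x \<noteq> 0"
    and sq: "\<And>y. y \<in> V \<Longrightarrow> det (t *\<^sub>R mat 1 - recursion_op P0 P1 y) = (f y)\<^sup>2"
  shows "recursion_adj P0 P1 x *v dfun f x
    = t *\<^sub>R dfun f x + (f x / 2) *\<^sub>R (\<chi> l. trace (recursion_op_deriv P0 P1 x l))"
proof -
  let ?p = "\<lambda>y. det (t *\<^sub>R mat 1 - recursion_op P0 P1 y)"
  let ?s = "\<chi> l. trace (recursion_op_deriv P0 P1 x l)"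
  have x: "x \<in> U" using V by auto
  have "partial ?p x l = partial (\<lambda>y. f y * f y) x l" for l
    by (rule partial_cong_open[OF V(1,3)]) (simp add: sq power2_eq_square)
  hence p': "dfun ?p x = (2 * f x) *\<^sub>R dfun f x"
    unfolding partial_mult[OF f(1) f(1)] by (simp add: dfun_def vec_eq_iff)
  have "recursion_adj P0 P1 x *v dfun ?p x = t *\<^sub>R dfun ?p x + ?p x *\<^sub>R ?s"
    by (rule recursion_adj_dfun_det_char[OF x]) (use sq V f in simp)
  hence "(2 * f x) *\<^sub>R (recursion_adj P0 P1 x *v dfun f x)
      = (2 * f x) *\<^sub>R (t *\<^sub>R dfun f x + (f x / 2) *\<^sub>R ?s)"
    unfolding p' sq[OF V(3)] by (simp add: matrix_vector_mult_scaleR power2_eq_square algebra_simps)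
  thus ?thesis using f(2) by simp
qed

end

lemma differentiable_coeff_prod:
  fixes p :: "'i \<Rightarrow> real^'m \<Rightarrow> real poly"
  assumes "finite A" and "\<And>i k. i \<in> A \<Longrightarrow> (\<lambda>y. coeff (p i y) k) differentiable (at x)"
  shows "(\<lambda>y. coeff (\<Prod>i\<in>A. p i y) k) differentiable (at x)"
  using assms
proof (induction A arbitrary: k rule: finite_induct)
  case empty
  show ?case by (simp add: coeff_1)
next
  case (insert a A)
  thus ?case by (simp add: coeff_mult)
qed

lemma degree_min_poly: "degree (min_poly n lam x) = n"
  unfolding min_poly_def by (simp add: degree_prod_sum_eq)

lemma coeff_min_poly_degree: "coeff (min_poly n lam x) n = 1"
proof -
  have "lead_coeff (min_poly n lam x) = 1" unfolding min_poly_def lead_coeff_prod by simp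
  thus ?thesis by (simp add: degree_min_poly)
qed

lemma differentiable_coeff_min_poly:
  assumes "\<forall>i<n. lam i differentiable (at x)"
  shows "(\<lambda>y. coeff (min_poly n lam y) k) differentiable (at x)"
  unfolding min_poly_def
proof (rule differentiable_coeff_prod)
  fix i k assume "i \<in> {..<n}"
  thus "(\<lambda>y. coeff [:- lam i y, 1:] k) differentiable (at x)"
    using assms by (cases k) (auto simp: coeff_pCons split: nat.split)
qed simp

lemma poly_eq_sum_coeff:
  fixes p :: "real poly"
  assumes "degree p \<le> n"
  shows "poly p t = (\<Sum>i\<le>n. coeff p i * t ^ i)"
proof -
  have "poly p t = (\<Sum>i\<le>degree p. coeff p i * t ^ i)" by (rule poly_altdef)
  also have "\<dots> = (\<Sum>i\<le>n. coeff p i * t ^ i)"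
    using assms by (intro sum.mono_neutral_left) (auto simp: coeff_eq_0)
  finally show ?thesis .
qed

lemma poly_min_poly: "poly (min_poly n lam y) t = (\<Prod>i<n. t - lam i y)"
  unfolding min_poly_def poly_prod by simp

lemma
  assumes "\<forall>i<n. lam i differentiable (at x)"
  shows differentiable_poly_min_poly: "(\<lambda>y. poly (min_poly n lam y) t) differentiable (at x)"
    and dfun_poly_min_poly: "dfun (\<lambda>y. poly (min_poly n lam y) t) x
      = (\<Sum>i\<le>n. t ^ i *\<^sub>R dfun (\<lambda>y. coeff (min_poly n lam y) i) x)"
proof -
  have poly_eq: "(\<lambda>y. poly (min_poly n lam y) t) = (\<lambda>y. \<Sum>i\<le>n. t ^ i * coeff (min_poly n lam y) i)"
    by (simp add: poly_eq_sum_coeff[of _ n] degree_min_poly mult.commute)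
  have coeff_diff: "\<And>i. (\<lambda>y. t ^ i * coeff (min_poly n lam y) i) differentiable (at x)"
    by (intro differentiable_mult differentiable_const differentiable_coeff_min_poly[OF assms])
  show "(\<lambda>y. poly (min_poly n lam y) t) differentiable (at x)"
    unfolding poly_eq by (rule differentiable_sum, simp, rule ballI, rule coeff_diff)
  show "dfun (\<lambda>y. poly (min_poly n lam y) t) x
      = (\<Sum>i\<le>n. t ^ i *\<^sub>R dfun (\<lambda>y. coeff (min_poly n lam y) i) x)"
  proof -
    have "partial (\<lambda>y. \<Sum>i\<le>n. t ^ i * coeff (min_poly n lam y) i) x l
        = (\<Sum>i\<le>n. partial (\<lambda>y. t ^ i * coeff (min_poly n lam y) i) x l)" for l
      by (rule partial_sum, simp, rule coeff_diff)
    thus ?thesis unfolding poly_eq dfun_def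
      by (simp add: vec_eq_iff sum_component partial_cmult[OF differentiable_coeff_min_poly[OF assms]])
  qed
qed

lemma sum_powers_eq_0_imp_coeffs_eq_0:
  fixes c :: "nat \<Rightarrow> real"
  assumes fin: "finite {t. \<not> P t}" and z: "\<And>t. P t \<Longrightarrow> (\<Sum>i\<le>n. c i * t ^ i) = 0" and i: "i \<le> n"
  shows "c i = 0"
proof -
  define q where "q = (\<Sum>i\<le>n. monom (c i) i)"
  have q: "poly q t = (\<Sum>i\<le>n. c i * t ^ i)" for t unfolding q_def by (simp add: poly_sum poly_monom)
  have "q = 0"
  proof (rule ccontr)
    assume "q \<noteq> 0"
    hence "finite {t. poly q t = 0}" by (rule poly_roots_finite)
    moreover have "{t. P t} \<subseteq> {t. poly q t = 0}" using z q by auto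
    ultimately have "finite ({t. P t} \<union> {t. \<not> P t})" using fin by (auto intro: finite_subset)
    moreover have "{t. P t} \<union> {t. \<not> P t} = (UNIV :: real set)" by auto
    ultimately show False by (simp add: infinite_UNIV_char_0)
  qed
  moreover have "coeff q i = c i" unfolding q_def coeff_sum using i by (simp add: sum.delta)
  ultimately show ?thesis by simp
qed

lemma scaleR_sum_powers:
  "t *\<^sub>R (\<Sum>i\<le>n. t ^ i *\<^sub>R (G i :: real^'m))
    = (\<Sum>i\<le>n. t ^ i *\<^sub>R (if i = 0 then 0 else G (i - 1))) + t ^ Suc n *\<^sub>R G n"
proof (induction n)
  case (Suc n)
  have "t *\<^sub>R (\<Sum>i\<le>Suc n. t ^ i *\<^sub>R G i)
      = t *\<^sub>R (\<Sum>i\<le>n. t ^ i *\<^sub>R G i) + t ^ Suc (Suc n) *\<^sub>R G (Suc n)"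
    by (simp add: scaleR_add_right)
  thus ?case unfolding Suc.IH by simp
qed simp

lemma matrix_vector_poly_identity:
  fixes L :: "real^'m^'m" and G :: "nat \<Rightarrow> real^'m" and a :: "nat \<Rightarrow> real"
  assumes G_n: "G n = 0" and fin: "finite {t. (\<Sum>i\<le>n. a i * t ^ i) = 0}"
    and identity: "\<And>t. (\<Sum>i\<le>n. a i * t ^ i) \<noteq> 0 \<Longrightarrow>
        L *v (\<Sum>i\<le>n. t ^ i *\<^sub>R G i) = t *\<^sub>R (\<Sum>i\<le>n. t ^ i *\<^sub>R G i) + (\<Sum>i\<le>n. a i * t ^ i) *\<^sub>R s"
  shows "\<And>i. i \<le> n \<Longrightarrow> L *v G i = (if i = 0 then 0 else G (i - 1)) + a i *\<^sub>R s"
    and "\<And>t. L *v (\<Sum>i\<le>n. t ^ i *\<^sub>R G i) = t *\<^sub>R (\<Sum>i\<le>n. t ^ i *\<^sub>R G i) + (\<Sum>i\<le>n. a i * t ^ i) *\<^sub>R s"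
proof -
  define e where "e i = L *v G i - (if i = 0 then 0 else G (i - 1)) - a i *\<^sub>R s" for i
  have e: "L *v (\<Sum>i\<le>n. t ^ i *\<^sub>R G i) - t *\<^sub>R (\<Sum>i\<le>n. t ^ i *\<^sub>R G i) - (\<Sum>i\<le>n. a i * t ^ i) *\<^sub>R s
      = (\<Sum>i\<le>n. t ^ i *\<^sub>R e i)" for t
    unfolding scaleR_sum_powers G_n e_def linear_sum[OF matrix_vector_mul_linear]
    by (simp add: scaleR_diff_right sum_subtractf matrix_vector_mult_scaleR scaleR_sum_left mult.commute)
  have e_0: "e i = 0" if "i \<le> n" for i
  proof -
    have "e i $ j = 0" for j
    proof (rule sum_powers_eq_0_imp_coeffs_eq_0[OF _ _ that, where P = "\<lambda>t. (\<Sum>i\<le>n. a i * t ^ i) \<noteq> 0"])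
      show "finite {t. \<not> (\<Sum>i\<le>n. a i * t ^ i) \<noteq> 0}" using fin by simp
      fix t assume "(\<Sum>i\<le>n. a i * t ^ i) \<noteq> 0"
      hence "(\<Sum>i\<le>n. t ^ i *\<^sub>R e i) $ j = 0" using identity[of t] e[of t, symmetric] by simp
      thus "(\<Sum>i\<le>n. e i $ j * t ^ i) = 0" by (simp add: sum_component mult.commute)
    qed
    thus ?thesis by (simp add: vec_eq_iff)
  qed
  show "\<And>i. i \<le> n \<Longrightarrow> L *v G i = (if i = 0 then 0 else G (i - 1)) + a i *\<^sub>R s"
    using e_0 unfolding e_def by (simp add: algebra_simps)
  show "L *v (\<Sum>i\<le>n. t ^ i *\<^sub>R G i) = t *\<^sub>R (\<Sum>i\<le>n. t ^ i *\<^sub>R G i) + (\<Sum>i\<le>n. a i * t ^ i) *\<^sub>R s" for t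
    using e[of t] e_0 by (simp add: algebra_simps)
qed

lemma (in poisson_pencil) recursion_adj_dfun_min_poly:
  assumes V: "open V" "V \<subseteq> U" "x \<in> V" and lam: "\<forall>i<n. lam i differentiable (at x)"
    and eig: "\<forall>y\<in>V. \<forall>t. det (t *\<^sub>R mat 1 - recursion_op P0 P1 y) = (\<Prod>i<n. (t - lam i y)) ^ 2"
  defines "G \<equiv> \<lambda>i. dfun (\<lambda>y. coeff (min_poly n lam y) i) x"
    and "s \<equiv> (\<chi> l. trace (recursion_op_deriv P0 P1 x l) / 2)"
  shows "\<And>i. i \<le> n \<Longrightarrow> recursion_adj P0 P1 x *v G i
      = (if i = 0 then 0 else G (i - 1)) + coeff (min_poly n lam x) i *\<^sub>R s"
    and "\<And>t. recursion_adj P0 P1 x *v dfun (\<lambda>y. poly (min_poly n lam y) t) x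
      = t *\<^sub>R dfun (\<lambda>y. poly (min_poly n lam y) t) x + poly (min_poly n lam x) t *\<^sub>R s"
proof -
  let ?a = "\<lambda>i. coeff (min_poly n lam x) i"
  have poly_x: "poly (min_poly n lam x) t = (\<Sum>i\<le>n. ?a i * t ^ i)" for t
    by (rule poly_eq_sum_coeff) (simp add: degree_min_poly)
  have dpoly: "dfun (\<lambda>y. poly (min_poly n lam y) t) x = (\<Sum>i\<le>n. t ^ i *\<^sub>R G i)" for t
    unfolding G_def by (rule dfun_poly_min_poly[OF lam])
  have G_n: "G n = 0"
    unfolding G_def coeff_min_poly_degree by (rule dfun_const)
  have fin: "finite {t. (\<Sum>i\<le>n. ?a i * t ^ i) = 0}"
  proof -
    have "min_poly n lam x \<noteq> 0" using coeff_min_poly_degree[of n lam x] by auto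
    hence "finite {t. poly (min_poly n lam x) t = 0}" by (rule poly_roots_finite)
    thus ?thesis unfolding poly_x .
  qed
  have identity: "recursion_adj P0 P1 x *v (\<Sum>i\<le>n. t ^ i *\<^sub>R G i)
      = t *\<^sub>R (\<Sum>i\<le>n. t ^ i *\<^sub>R G i) + (\<Sum>i\<le>n. ?a i * t ^ i) *\<^sub>R s"
    if "(\<Sum>i\<le>n. ?a i * t ^ i) \<noteq> 0" for t
  proof -
    have nz: "poly (min_poly n lam x) t \<noteq> 0" using that unfolding poly_x .
    have sq: "det (t *\<^sub>R mat 1 - recursion_op P0 P1 y) = (poly (min_poly n lam y) t)\<^sup>2"
      if "y \<in> V" for y
      using eig that unfolding poly_min_poly by simp
    have "recursion_adj P0 P1 x *v dfun (\<lambda>y. poly (min_poly n lam y) t) x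
        = t *\<^sub>R dfun (\<lambda>y. poly (min_poly n lam y) t) x
          + (poly (min_poly n lam x) t / 2) *\<^sub>R (\<chi> l. trace (recursion_op_deriv P0 P1 x l))"
      by (rule recursion_adj_dfun_sqrt_det_char[OF V differentiable_poly_min_poly[OF lam] nz sq])
    also have "(poly (min_poly n lam x) t / 2) *\<^sub>R (\<chi> l. trace (recursion_op_deriv P0 P1 x l))
        = poly (min_poly n lam x) t *\<^sub>R s"
      unfolding s_def by (simp add: vec_eq_iff)
    finally show ?thesis unfolding dpoly poly_x .
  qed
  note coeffwise = matrix_vector_poly_identity[of G n, OF G_n fin identity]
  show "\<And>i. i \<le> n \<Longrightarrow> recursion_adj P0 P1 x *v G i
      = (if i = 0 then 0 else G (i - 1)) + ?a i *\<^sub>R s"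
    by (rule coeffwise(1))
  show "recursion_adj P0 P1 x *v dfun (\<lambda>y. poly (min_poly n lam y) t) x
      = t *\<^sub>R dfun (\<lambda>y. poly (min_poly n lam y) t) x + poly (min_poly n lam x) t *\<^sub>R s" for t
    unfolding dpoly poly_x by (rule coeffwise(2))
qed

lemma dfun_cf:
  assumes lam: "\<forall>i<n. lam i differentiable (at x)"
  shows "dfun (cf n lam k) x
    = (if 1 \<le> k \<and> k \<le> n then - dfun (\<lambda>y. coeff (min_poly n lam y) (n - k)) x else 0)"
proof (cases "1 \<le> k \<and> k \<le> n")
  case True
  hence "cf n lam k = (\<lambda>y. - coeff (min_poly n lam y) (n - k))" by (simp add: cf_def fun_eq_iff)
  thus ?thesis
    using True by (simp add: dfun_def vec_eq_iff partial_uminus[OF differentiable_coeff_min_poly[OF lam]])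
next
  case False
  hence "cf n lam k = (\<lambda>y. 0)" unfolding cf_def by auto
  thus ?thesis using False by (auto simp: dfun_const)
qed

text \<open>
  The coefficient of \<open>\<lambda>\<^sup>i\<close> in \<open>\<Delta>\<^sub>N\<close> is \<open>-c\<^sub>n\<^sub>-\<^sub>i\<close> for \<open>i < n\<close>; in these terms the coefficientwise identity
  reads \<open>s = dc\<^sub>1\<close> (at \<open>i = n\<close>) and \<open>L dc\<^sub>i = dc\<^sub>i\<^sub>+\<^sub>1 + c\<^sub>i s\<close>.
\<close>
lemma cf_recursion:
  fixes L :: "real^'m^'m"
  assumes lam: "\<forall>i<n. lam i differentiable (at x)" and n: "1 \<le> n"
  defines "G \<equiv> \<lambda>i. dfun (\<lambda>y. coeff (min_poly n lam y) i) x"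
  assumes coeffwise: "\<And>i. i \<le> n \<Longrightarrow> L *v G i
      = (if i = 0 then 0 else G (i - 1)) + coeff (min_poly n lam x) i *\<^sub>R s"
  shows "s = dfun (cf n lam 1) x"
    and "\<And>i. i \<in> {1..n} \<Longrightarrow>
      L *v dfun (cf n lam i) x = dfun (cf n lam (i + 1)) x + cf n lam i x *\<^sub>R dfun (cf n lam 1) x"
proof -
  have "G n = 0" unfolding G_def coeff_min_poly_degree by (rule dfun_const)
  hence "s = - G (n - 1)"
    using coeffwise[of n] n by (simp add: coeff_min_poly_degree eq_neg_iff_add_eq_0 add.commute)
  thus s: "s = dfun (cf n lam 1) x" using n by (simp add: dfun_cf[OF lam] G_def)
  fix i assume i: "i \<in> {1..n}"
  have "cf n lam i x = - coeff (min_poly n lam x) (n - i)" using i by (simp add: cf_def)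
  moreover have "dfun (cf n lam (i + 1)) x = - (if n - i = 0 then 0 else G (n - i - 1))"
    using i by (auto simp: dfun_cf[OF lam] G_def Suc_diff_Suc)
  ultimately show "L *v dfun (cf n lam i) x = dfun (cf n lam (i + 1)) x + cf n lam i x *\<^sub>R dfun (cf n lam 1) x"
    using i coeffwise[of "n - i"] unfolding s[symmetric]
    by (simp add: dfun_cf[OF lam] G_def linear_neg[OF matrix_vector_mul_linear] algebra_simps)
qed

theorem mainTheorem3:
  fixes U V :: "(real^'m) set"
    and P0 P1 :: "real^'m \<Rightarrow> real^'m^'m"
    and n :: nat
    and lam :: "nat \<Rightarrow> real^'m \<Rightarrow> real"
  assumes dim: "CARD('m) = 2 * n"
    and U_open: "open U"
    and P0_poisson: "is_poisson U P0"
    and P1_poisson: "is_poisson U P1"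
    and compat: "compatible_poisson U P0 P1"
    and P0_inv: "\<forall>x\<in>U. invertible (P0 x)"
    and V_open: "open V" and VU: "V \<subseteq> U"
    and lam_smooth: "\<forall>i<n. smooth_on V (lam i)"
    and lam_distinct: "\<forall>x\<in>V. \<forall>i<n. \<forall>j<n. i \<noteq> j \<longrightarrow> lam i x \<noteq> lam j x"
    and eig: "\<forall>x\<in>V. \<forall>t::real.
               det (t *\<^sub>R mat 1 - recursion_op P0 P1 x) = (\<Prod>i<n. (t - lam i x)) ^ 2"
  shows "(\<forall>\<mu>::real. \<forall>x\<in>V.
            recursion_adj P0 P1 x *v dfun (\<lambda>y. poly (min_poly n lam y) \<mu>) x
            = \<mu> *\<^sub>R dfun (\<lambda>y. poly (min_poly n lam y) \<mu>) x
              + poly (min_poly n lam x) \<mu> *\<^sub>R dfun (cf n lam 1) x)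
       \<and> (\<forall>i\<in>{1..n}. \<forall>x\<in>V.
            recursion_adj P0 P1 x *v dfun (cf n lam i) x
            = dfun (cf n lam (i + 1)) x + cf n lam i x *\<^sub>R dfun (cf n lam 1) x)"
proof -
  interpret poisson_pencil U P0 P1
    using U_open P0_poisson P1_poisson compat P0_inv by unfold_locales
  have n: "1 \<le> n" using dim by (metis One_nat_def Suc_leI mult_0_right neq0_conv zero_less_card_finite)
  have lam_diff: "\<forall>i<n. lam i differentiable (at x)" if "x \<in> V" for x
    using lam_smooth smooth_on_differentiable that by blast
  note min_poly_identities = recursion_adj_dfun_min_poly[OF V_open VU _ lam_diff eig]
  note recursion = cf_recursion[OF lam_diff n min_poly_identities(1)]
  show ?thesis using min_poly_identities(2) recursion by auto
qed

end
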